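(* Let $n$ and $k\geq 2$ be positive integers, let $P=(p_1,\dots,p_k)$ be a probability distribution on $\{1,\dots,k\}$, let $X=(X_1,\dots,X_k)$ be multinomially distributed with $n$ samples and probabilities $P$, and let $V_{n,k,P}=D\big((X_1/n,\dots,X_k/n)\,\|\,(p_1,\dots,p_k)\big)$. Then for all real $0\leq t<n$, \[ \mathbb{E}\big[\exp(t\cdot V_{n,k,P})\big]\leq\left(\frac{1}{1-t/n}\right)^{k-1}. \]
   Context: For probability distributions $(q_1,\dots,q_k)$ and $(p_1,\dots,p_k)$ on a finite set, the Kullback--Leibler divergence is $D\big((q_1,\dots,q_k)\,\|\,(p_1,\dots,p_k)\big)=\sum_{i=1}^k q_i\log\frac{q_i}{p_i}$, with natural logarithm and the usual conventions $0\log(0/p)=0$. *)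

theory Defs
  imports "HOL-Analysis.Analysis"
begin

text \<open>Distributions on {1..k} are functions nat => real; only values on {1..k} matter.\<close>

definition prob_dist :: "nat \<Rightarrow> (nat \<Rightarrow> real) \<Rightarrow> bool" where
  "prob_dist k p \<longleftrightarrow> (\<forall>i\<in>{1..k}. p i \<ge> 0) \<and> (\<Sum>i=1..k. p i) = 1"

definition KL :: "nat \<Rightarrow> (nat \<Rightarrow> real) \<Rightarrow> (nat \<Rightarrow> real) \<Rightarrow> real" where
  "KL k q p = (\<Sum>i=1..k. if q i = 0 then 0 else q i * ln (q i / p i))"

definition count_vectors :: "nat \<Rightarrow> nat \<Rightarrow> (nat \<Rightarrow> nat) set" where
  "count_vectors n k = {x. (\<forall>i. i \<notin> {1..k} \<longrightarrow> x i = 0) \<and> (\<Sum>i=1..k. x i) = n}"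

definition multinomial_pmf :: "nat \<Rightarrow> nat \<Rightarrow> (nat \<Rightarrow> real) \<Rightarrow> (nat \<Rightarrow> nat) \<Rightarrow> real" where
  "multinomial_pmf n k p x =
     fact n / (\<Prod>i=1..k. fact (x i)) * (\<Prod>i=1..k. p i ^ x i)"

definition multinomial_expectation ::
  "nat \<Rightarrow> nat \<Rightarrow> (nat \<Rightarrow> real) \<Rightarrow> ((nat \<Rightarrow> nat) \<Rightarrow> real) \<Rightarrow> real" where
  "multinomial_expectation n k p f =
     (\<Sum>x\<in>count_vectors n k. multinomial_pmf n k p x * f x)"

end

theory Submission
  imports Defs
begin

text \<open>Write s = t / n. The summand of the expectation at a count vector x is the multinomial
  coefficient times the product of (p_i^(1-s) (x_i/n)^s)^x_i. Splitting off the last coordinate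
  and conditioning the others on it gives a recursion in k whose inner sums have the same form,
  so by induction it suffices to bound the binomial case by 1 / (1 - s). There, weighted AM-GM
  bounds each factor by an affine function of the count, and Abel's generalisation of the
  binomial theorem evaluates the resulting sum as the sum over m of n!/(n-m)! (s/n)^m, which is
  at most the geometric series of s.\<close>

definition fwd_diff :: "nat \<Rightarrow> (nat \<Rightarrow> 'a::comm_ring_1) \<Rightarrow> 'a" where
  "fwd_diff n f = (\<Sum>j\<le>n. of_nat (n choose j) * (-1)^(n - j) * f j)"

lemma fwd_diff_Suc: "fwd_diff (Suc n) f = fwd_diff n (\<lambda>j. f (Suc j) - f j)"
proof -
  define g where "g j = of_nat (n choose j) * (-1)^(Suc n - j) * f j" for j
  have "fwd_diff (Suc n) f
      = (-1)^(Suc n) * f 0 + (\<Sum>j\<le>n. of_nat (n choose j) * (-1)^(n - j) * f (Suc j))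
        + (\<Sum>j\<le>n. g (Suc j))"
    unfolding fwd_diff_def sum.atMost_Suc_shift
    by (simp add: g_def sum.distrib algebra_simps)
  also have "(\<Sum>j\<le>n. g (Suc j)) = (\<Sum>j\<le>Suc n. g j) - g 0"
    unfolding sum.atMost_Suc_shift by simp
  also have "(\<Sum>j\<le>Suc n. g j) = - fwd_diff n f"
    unfolding fwd_diff_def sum_negf[symmetric]
    by (simp add: g_def binomial_eq_0) (auto intro!: sum.cong simp: Suc_diff_le)
  finally show ?thesis
    by (simp add: fwd_diff_def g_def sum_subtractf algebra_simps)
qed

lemma fwd_diff_power_linear:
  fixes a b :: "'a::comm_ring_1"
  assumes "r \<le> n"
  shows "fwd_diff n (\<lambda>j. (a + b * of_nat j)^r) = (if r = n then of_nat (fact n) * b^n else 0)"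
  using assms
proof (induction n arbitrary: r)
  case 0
  then show ?case by (simp add: fwd_diff_def)
next
  case (Suc n)
  have step: "(a + b * of_nat (Suc j))^r - (a + b * of_nat j)^r
      = (\<Sum>i<r. of_nat (r choose i) * b^(r - i) * (a + b * of_nat j)^i)" for j
  proof -
    have "(a + b * of_nat (Suc j))^r = ((a + b * of_nat j) + b)^r"
      by (simp add: algebra_simps)
    also have "\<dots> = (\<Sum>i\<le>r. of_nat (r choose i) * (a + b * of_nat j)^i * b^(r - i))"
      by (rule binomial_ring)
    finally show ?thesis
      by (simp add: lessThan_Suc_atMost[symmetric] algebra_simps)
  qed
  have "fwd_diff (Suc n) (\<lambda>j. (a + b * of_nat j)^r)
      = fwd_diff n (\<lambda>j. \<Sum>i<r. of_nat (r choose i) * b^(r - i) * (a + b * of_nat j)^i)"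
    by (simp only: fwd_diff_Suc step)
  also have "\<dots> = (\<Sum>i<r. of_nat (r choose i) * b^(r - i) * fwd_diff n (\<lambda>j. (a + b * of_nat j)^i))"
    unfolding fwd_diff_def sum_distrib_left
    by (subst sum.swap) (simp add: mult_ac)
  also have "\<dots> = (\<Sum>i<r. of_nat (r choose i) * b^(r - i) * (if i = n then of_nat (fact n) * b^n else 0))"
    using Suc by (intro sum.cong) auto
  also have "\<dots> = (if r = Suc n then of_nat (fact (Suc n)) * b^(Suc n) else 0)"
    using Suc.prems by (auto simp: algebra_simps)
  finally show ?case .
qed

definition abel_sum :: "real \<Rightarrow> nat \<Rightarrow> real \<Rightarrow> real \<Rightarrow> real" where
  "abel_sum b n a c =
     (\<Sum>j\<le>n. real (n choose j) * (a + b * real j)^j * (c + b * real (n - j))^(n - j))"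

definition falling_power_sum :: "real \<Rightarrow> nat \<Rightarrow> real \<Rightarrow> real" where
  "falling_power_sum b n u = (\<Sum>m\<le>n. fact n / fact (n - m) * b^m * u^(n - m))"

lemma abel_sum_has_real_derivative:
  "((\<lambda>c. abel_sum b (Suc n) a c) has_real_derivative real (Suc n) * abel_sum b n a (c + b)) (at c)"
proof -
  define D where "D m j = real (m choose j) * (a + b * real j)^j
    * (real (m - j) * (c + b * real (m - j))^(m - j - 1))" for m j
  have deriv: "((\<lambda>c. abel_sum b m a c) has_real_derivative (\<Sum>j\<le>m. D m j)) (at c)" for m
    unfolding abel_sum_def D_def by (auto intro!: derivative_eq_intros DERIV_sum)
  have summand: "D (Suc n) j
      = real (Suc n) * (real (n choose j) * (a + b * real j)^j * ((c + b) + b * real (n - j))^(n - j))"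
    if "j \<le> n" for j
  proof -
    have Suc_diff: "Suc n - j = Suc (n - j)"
      using that by (simp add: Suc_diff_le)
    have absorb: "real (Suc (n - j)) * real (Suc n choose j) = real (Suc n) * real (n choose j)"
      using binomial_absorb_comp[of "Suc n" j] Suc_diff by (metis diff_Suc_1 of_nat_mult)
    have shift: "c + b * real (Suc (n - j)) = (c + b) + b * real (n - j)"
      by (simp add: algebra_simps)
    have "D (Suc n) j = (real (Suc (n - j)) * real (Suc n choose j))
        * ((a + b * real j)^j * ((c + b) + b * real (n - j))^(n - j))"
      unfolding D_def Suc_diff diff_Suc_1 shift by (simp only: mult_ac)
    then show ?thesis
      unfolding absorb by (simp only: mult_ac)
  qed
  have "(\<Sum>j\<le>Suc n. D (Suc n) j) = (\<Sum>j\<le>n. D (Suc n) j)"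
    by (simp add: D_def)
  also have "\<dots> = real (Suc n) * abel_sum b n a (c + b)"
    unfolding abel_sum_def sum_distrib_left by (intro sum.cong refl summand) simp
  finally show ?thesis
    using deriv[of "Suc n"] by simp
qed

lemma falling_power_sum_has_real_derivative:
  "(falling_power_sum b (Suc n) has_real_derivative real (Suc n) * falling_power_sum b n u) (at u)"
proof -
  define D where "D k m = fact k / fact (k - m) * b^m * (real (k - m) * u^(k - m - 1))" for k m
  have deriv: "(falling_power_sum b k has_real_derivative (\<Sum>m\<le>k. D k m)) (at u)" for k
    unfolding falling_power_sum_def D_def by (auto intro!: derivative_eq_intros DERIV_sum)
  have "D (Suc n) m = real (Suc n) * (fact n / fact (n - m) * b^m * u^(n - m))"
    if "m \<le> n" for m
  proof -
    have Suc_diff: "Suc n - m = Suc (n - m)"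
      using that by (simp add: Suc_diff_le)
    have "fact (Suc n) / fact (Suc n - m) * real (Suc n - m) = real (Suc n) * (fact n / fact (n - m))"
      unfolding Suc_diff fact_Suc[of "n - m"] by (simp del: of_nat_Suc)
    then show ?thesis
      by (simp add: D_def Suc_diff mult_ac del: of_nat_Suc)
  qed
  then have "(\<Sum>m\<le>Suc n. D (Suc n) m) = real (Suc n) * falling_power_sum b n u"
    unfolding falling_power_sum_def sum_distrib_left by (simp add: D_def)
  then show ?thesis
    using deriv[of "Suc n"] by simp
qed

lemma abel_sum_at_root: "abel_sum b n a (- a - b * real n) = fact n * b^n"
proof -
  have "abel_sum b n a (- a - b * real n) = fwd_diff n (\<lambda>j. (a + b * real j)^n)"
    unfolding abel_sum_def fwd_diff_def
  proof (intro sum.cong refl)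
    fix j assume "j \<in> {..n}"
    then have j: "j \<le> n" by simp
    have "- a - b * real n + b * real (n - j) = - (a + b * real j)"
      using j by (simp add: algebra_simps)
    then have "(- a - b * real n + b * real (n - j))^(n - j) = (-1)^(n - j) * (a + b * real j)^(n - j)"
      by (metis power_minus)
    moreover have "(a + b * real j)^j * (a + b * real j)^(n - j) = (a + b * real j)^n"
      using j by (metis le_add_diff_inverse power_add)
    ultimately show "real (n choose j) * (a + b * real j)^j * (- a - b * real n + b * real (n - j))^(n - j)
        = real (n choose j) * (-1)^(n - j) * (a + b * real j)^n"
      by (metis mult.assoc mult.left_commute)
  qed
  then show ?thesis
    using fwd_diff_power_linear[of n n a b] by simp
qed

lemma falling_power_sum_0: "falling_power_sum b n 0 = fact n * b^n"
proof -
  have "falling_power_sum b n 0 = (\<Sum>m\<le>n. if m = n then fact n * b^n else 0)"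
    unfolding falling_power_sum_def by (intro sum.cong) auto
  then show ?thesis by simp
qed

text \<open>Differentiating in \<open>c\<close> reduces it to the case \<open>n - 1\<close>, and at
  \<open>c = - a - b n\<close> the left-hand side is an \<open>n\<close>-th finite difference of a polynomial of degree \<open>n\<close>.\<close>
theorem abel_identity: "abel_sum b n a c = falling_power_sum b n (a + c + b * real n)"
proof (induction n arbitrary: a c)
  case 0
  then show ?case by (simp add: abel_sum_def falling_power_sum_def)
next
  case (Suc n)
  define g where "g c = abel_sum b (Suc n) a c - falling_power_sum b (Suc n) (a + c + b * real (Suc n))"
    for c
  have "(g has_real_derivative 0) (at x)" for x
  proof -
    have "(g has_real_derivative real (Suc n) * abel_sum b n a (x + b)
        - real (Suc n) * falling_power_sum b n (a + x + b * real (Suc n))) (at x)"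
      unfolding g_def
      by (auto intro!: derivative_eq_intros abel_sum_has_real_derivative
          DERIV_chain2[OF falling_power_sum_has_real_derivative])
    moreover have "abel_sum b n a (x + b) = falling_power_sum b n (a + x + b * real (Suc n))"
      using Suc.IH[of a "x + b"] by (simp add: algebra_simps)
    ultimately show ?thesis by simp
  qed
  then have "g c = g (- a - b * real (Suc n))"
    by (intro DERIV_isconst_all) blast
  also have "\<dots> = 0"
    unfolding g_def using abel_sum_at_root[of b "Suc n" a] falling_power_sum_0[of b "Suc n"] by simp
  finally show ?case
    unfolding g_def by simp
qed

lemma falling_power_sum_le_geometric:
  assumes "0 \<le> s" "s < 1" "n > 0"
  shows "falling_power_sum (s / real n) n 1 \<le> 1 / (1 - s)"
proof -
  have "falling_power_sum (s / real n) n 1 \<le> (\<Sum>m\<le>n. s^m)"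
    unfolding falling_power_sum_def
  proof (intro sum_mono)
    fix m assume "m \<in> {..n}"
    then have "fact n div fact (n - m) \<le> n^m"
      by (intro fact_div_fact_le_pow) simp
    moreover have "fact (n - m) dvd (fact n :: nat)"
      by (rule fact_dvd) simp
    ultimately have "fact n / fact (n - m) \<le> real n ^ m"
      by (metis of_nat_fact of_nat_le_iff of_nat_power real_of_nat_div)
    then have "fact n / fact (n - m) * (s / real n)^m \<le> real n ^ m * (s / real n)^m"
      using assms by (intro mult_right_mono) auto
    also have "\<dots> = s^m"
      using assms by (simp add: power_divide)
    finally show "fact n / fact (n - m) * (s / real n)^m * 1^(n - m) \<le> s^m"
      by simp
  qed
  also have "\<dots> \<le> (\<Sum>m. s^m)"
    using assms by (intro sum_le_suminf summable_geometric) auto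
  also have "\<dots> = 1 / (1 - s)"
    using assms by (simp add: suminf_geometric)
  finally show ?thesis .
qed

definition geom_mean :: "real \<Rightarrow> real \<Rightarrow> real \<Rightarrow> real" where
  "geom_mean s u v = u powr (1 - s) * v powr s"

lemma geom_mean_nonneg: "0 \<le> geom_mean s u v"
  by (simp add: geom_mean_def)

lemma geom_mean_0_left: "geom_mean s 0 v = 0"
  by (simp add: geom_mean_def)

lemma geom_mean_le_arith_mean:
  assumes "0 \<le> u" "0 \<le> v" "0 \<le> s" "s \<le> 1"
  shows "geom_mean s u v \<le> (1 - s) * u + s * v"
  using assms Youngs_inequality_0[of "1 - s" s u v]
  by (cases "u = 0 \<or> v = 0") (auto simp: geom_mean_def)

lemma geom_mean_mult:
  assumes "0 \<le> u" "0 \<le> u'" "0 \<le> v" "0 \<le> v'"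
  shows "geom_mean s (u * u') (v * v') = geom_mean s u v * geom_mean s u' v'"
  using assms by (simp add: geom_mean_def powr_mult)

text \<open>Termwise AM-GM turns the sum into an Abel sum.\<close>
lemma binomial_geom_mean_sum_le:
  assumes "0 \<le> q" "q \<le> 1" "0 \<le> s" "s < 1"
  shows "(\<Sum>j\<le>n. real (n choose j) * geom_mean s q (real j / real n)^j
           * geom_mean s (1 - q) (real (n - j) / real n)^(n - j)) \<le> 1 / (1 - s)"
proof (cases "n = 0")
  case True
  then show ?thesis using assms by simp
next
  case False
  define b where "b = s / real n"
  define a where "a = (1 - s) * q"
  define c where "c = (1 - s) * (1 - q)"
  have "(\<Sum>j\<le>n. real (n choose j) * geom_mean s q (real j / real n)^j
           * geom_mean s (1 - q) (real (n - j) / real n)^(n - j)) \<le> abel_sum b n a c"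
    unfolding abel_sum_def
  proof (rule sum_mono)
    fix j
    have "geom_mean s q (real j / real n) \<le> a + b * real j"
      using geom_mean_le_arith_mean[of q "real j / real n" s] assms by (simp add: a_def b_def)
    moreover have "geom_mean s (1 - q) (real (n - j) / real n) \<le> c + b * real (n - j)"
      using geom_mean_le_arith_mean[of "1 - q" "real (n - j) / real n" s] assms
      by (simp add: c_def b_def)
    moreover have "0 \<le> a + b * real j"
      using assms by (simp add: a_def b_def)
    ultimately show "real (n choose j) * geom_mean s q (real j / real n)^j
        * geom_mean s (1 - q) (real (n - j) / real n)^(n - j)
      \<le> real (n choose j) * (a + b * real j)^j * (c + b * real (n - j))^(n - j)"
      by (intro mult_mono mult_left_mono power_mono) (auto simp: geom_mean_nonneg)
  qed
  also have "\<dots> = falling_power_sum b n 1"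
    using False by (simp add: abel_identity a_def b_def c_def algebra_simps)
  also have "\<dots> \<le> 1 / (1 - s)"
    unfolding b_def using False assms by (intro falling_power_sum_le_geometric) auto
  finally show ?thesis .
qed

lemma count_vectors_le: "x \<in> count_vectors n k \<Longrightarrow> x i \<le> n"
  unfolding count_vectors_def
  by (cases "i \<in> {1..k}") (auto intro: member_le_sum[where f = x and A = "{1..k}", simplified])

lemma count_vectors_outside: "x \<in> count_vectors n k \<Longrightarrow> i \<notin> {1..k} \<Longrightarrow> x i = 0"
  unfolding count_vectors_def by blast

lemma sum_count_vectors: "x \<in> count_vectors n k \<Longrightarrow> (\<Sum>i=1..k. x i) = n"
  unfolding count_vectors_def by blast

lemma finite_count_vectors: "finite (count_vectors n k)"
proof (rule finite_subset)
  show "count_vectors n k \<subseteq> {x. \<forall>i. (i \<in> {1..k} \<longrightarrow> x i \<in> {..n}) \<and> (i \<notin> {1..k} \<longrightarrow> x i = 0)}"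
    using count_vectors_le count_vectors_outside by blast
  show "finite {x. \<forall>i. (i \<in> {1..k} \<longrightarrow> x i \<in> {..n}) \<and> (i \<notin> {1..k} \<longrightarrow> x i = (0::nat))}"
    by (rule finite_set_of_finite_funs) auto
qed

lemma count_vectors_0: "count_vectors 0 k = {\<lambda>_. 0}"
proof (intro equalityI subsetI)
  fix x assume "x \<in> count_vectors 0 k"
  then have "x i = 0" for i
    using count_vectors_le[of x 0 k i] by simp
  then show "x \<in> {\<lambda>_. 0}" by auto
qed (simp add: count_vectors_def)

lemma count_vectors_1: "count_vectors n 1 = {(\<lambda>_. 0)(1 := n)}"
proof (intro equalityI subsetI)
  fix x assume x: "x \<in> count_vectors n 1"
  then have "x i = ((\<lambda>_. 0)(1 := n)) i" for i
    using sum_count_vectors[OF x] count_vectors_outside[OF x, of i] by (cases "i = 1") auto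
  then show "x \<in> {(\<lambda>_. 0)(1 := n)}" by auto
qed (simp add: count_vectors_def)

lemma count_vectors_Suc:
  "count_vectors n (Suc k) = (\<lambda>(j, y). y(Suc k := j)) ` (SIGMA j:{..n}. count_vectors (n - j) k)"
proof (intro equalityI subsetI)
  fix x assume x: "x \<in> count_vectors n (Suc k)"
  have "(\<Sum>i=1..k. x i) + x (Suc k) = n"
    using sum_count_vectors[OF x] by simp
  then have "x(Suc k := 0) \<in> count_vectors (n - x (Suc k)) k"
    using count_vectors_outside[OF x] by (auto simp: count_vectors_def)
  moreover have "x (Suc k) \<le> n"
    using count_vectors_le[OF x] .
  ultimately show "x \<in> (\<lambda>(j, y). y(Suc k := j)) ` (SIGMA j:{..n}. count_vectors (n - j) k)"
    by (intro image_eqI[of _ _ "(x (Suc k), x(Suc k := 0))"]) auto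
next
  fix x assume "x \<in> (\<lambda>(j, y). y(Suc k := j)) ` (SIGMA j:{..n}. count_vectors (n - j) k)"
  then obtain j y where j: "j \<le> n" and y: "y \<in> count_vectors (n - j) k" and x: "x = y(Suc k := j)"
    by auto
  have "(\<Sum>i=1..k. x i) = (\<Sum>i=1..k. y i)"
    unfolding x by (intro sum.cong) auto
  then show "x \<in> count_vectors n (Suc k)"
    using j sum_count_vectors[OF y] count_vectors_outside[OF y]
    unfolding count_vectors_def x by auto
qed

lemma sum_count_vectors_Suc:
  "(\<Sum>x\<in>count_vectors n (Suc k). f x) = (\<Sum>j\<le>n. \<Sum>y\<in>count_vectors (n - j) k. f (y(Suc k := j)))"
proof -
  have inj: "inj_on (\<lambda>(j, y). y(Suc k := j)) (SIGMA j:{..n}. count_vectors (n - j) k)"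
  proof (rule inj_onI, clarsimp)
    fix j j' y y'
    assume "y \<in> count_vectors (n - j) k" "y' \<in> count_vectors (n - j') k"
      and eq: "y(Suc k := j) = y'(Suc k := j')"
    then have "y (Suc k) = 0" "y' (Suc k) = 0"
      by (auto intro: count_vectors_outside)
    then show "j = j' \<and> y = y'"
      using fun_upd_eqD[OF eq] eq by (metis fun_upd_triv fun_upd_upd)
  qed
  show ?thesis
    unfolding count_vectors_Suc sum.reindex[OF inj]
    by (simp add: sum.Sigma finite_count_vectors comp_def case_prod_unfold)
qed

definition multinomial_geom_mean_sum :: "nat \<Rightarrow> nat \<Rightarrow> (nat \<Rightarrow> real) \<Rightarrow> real \<Rightarrow> real" where
  "multinomial_geom_mean_sum k n p s =
     (\<Sum>x\<in>count_vectors n k. fact n / (\<Prod>i=1..k. fact (x i))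
        * (\<Prod>i=1..k. geom_mean s (p i) (real (x i) / real n) ^ x i))"

lemma multinomial_geom_mean_sum_0: "multinomial_geom_mean_sum k 0 p s = 1"
  by (simp add: multinomial_geom_mean_sum_def count_vectors_0)

lemma multinomial_geom_mean_sum_1: "p 1 = 1 \<Longrightarrow> multinomial_geom_mean_sum 1 n p s = 1"
  unfolding multinomial_geom_mean_sum_def count_vectors_1
  by (cases "n = 0") (simp_all add: geom_mean_def)

lemma fact_div_prod_fact_fun_upd:
  assumes "j \<le> n"
  shows "fact n / (\<Prod>i=1..Suc k. fact ((y(Suc k := j)) i))
       = real (n choose j) * (fact (n - j) / (\<Prod>i=1..k. fact (y i)))"
proof -
  have "(\<Prod>i=1..k. fact ((y(Suc k := j)) i)) = (\<Prod>i=1..k. fact (y i) :: real)"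
    by (intro prod.cong) auto
  then have "(\<Prod>i=1..Suc k. fact ((y(Suc k := j)) i)) = (\<Prod>i=1..k. fact (y i)) * (fact j :: real)"
    by simp
  moreover have "(\<Prod>i=1..k. fact (y i) :: real) > 0"
    by (intro prod_pos) auto
  ultimately show ?thesis
    using binomial_fact[OF assms, where 'a = real] by (simp add: field_simps)
qed

lemma prod_geom_mean_rescale:
  assumes p: "\<And>i. i \<in> {1..k} \<Longrightarrow> 0 \<le> p i" and P: "P = (\<Sum>i=1..k. p i)"
    and y: "y \<in> count_vectors m k"
  shows "(\<Prod>i=1..k. geom_mean s (p i) (real (y i) / real n) ^ y i)
       = geom_mean s P (real m / real n) ^ m
         * (\<Prod>i=1..k. geom_mean s (p i / P) (real (y i) / real m) ^ y i)"
proof -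
  have factor: "geom_mean s (p i) (real (y i) / real n)
      = geom_mean s P (real m / real n) * geom_mean s (p i / P) (real (y i) / real m)"
    if i: "i \<in> {1..k}" for i
  proof -
    have "p i = P * (p i / P)"
    proof (cases "P = 0")
      case True
      then show ?thesis
        using p i sum_nonneg_eq_0_iff[of "{1..k}" p] unfolding P by simp
    qed simp
    moreover have "real (y i) / real n = (real m / real n) * (real (y i) / real m)"
      using count_vectors_le[OF y, of i] by (cases "m = 0") auto
    moreover have "0 \<le> P"
      unfolding P using p by (intro sum_nonneg) auto
    ultimately show ?thesis
      using p[OF i] by (metis divide_nonneg_nonneg geom_mean_mult of_nat_0_le_iff)
  qed
  have "(\<Prod>i=1..k. geom_mean s P (real m / real n) ^ y i) = geom_mean s P (real m / real n) ^ m"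
    unfolding power_sum[symmetric] sum_count_vectors[OF y] ..
  then show ?thesis
    by (simp add: factor power_mult_distrib prod.distrib)
qed

lemma multinomial_geom_mean_sum_Suc:
  assumes p: "\<And>i. i \<in> {1..k} \<Longrightarrow> 0 \<le> p i" and P: "P = (\<Sum>i=1..k. p i)"
  shows "multinomial_geom_mean_sum (Suc k) n p s
       = (\<Sum>j\<le>n. real (n choose j) * geom_mean s (p (Suc k)) (real j / real n) ^ j
            * geom_mean s P (real (n - j) / real n) ^ (n - j)
            * multinomial_geom_mean_sum k (n - j) (\<lambda>i. p i / P) s)"
  unfolding multinomial_geom_mean_sum_def sum_count_vectors_Suc sum_distrib_left
proof (intro sum.cong refl)
  fix j y assume "j \<in> {..n}" and y: "y \<in> count_vectors (n - j) k"
  then have j: "j \<le> n" by simp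
  have "(\<Prod>i=1..k. geom_mean s (p i) (real ((y(Suc k := j)) i) / real n) ^ (y(Suc k := j)) i)
      = (\<Prod>i=1..k. geom_mean s (p i) (real (y i) / real n) ^ y i)"
    by (intro prod.cong) auto
  then have prod_Suc: "(\<Prod>i=1..Suc k. geom_mean s (p i) (real ((y(Suc k := j)) i) / real n) ^ (y(Suc k := j)) i)
      = (\<Prod>i=1..k. geom_mean s (p i) (real (y i) / real n) ^ y i)
        * geom_mean s (p (Suc k)) (real j / real n) ^ j"
    by simp
  show "fact n / (\<Prod>i=1..Suc k. fact ((y(Suc k := j)) i))
      * (\<Prod>i=1..Suc k. geom_mean s (p i) (real ((y(Suc k := j)) i) / real n) ^ (y(Suc k := j)) i)
    = real (n choose j) * geom_mean s (p (Suc k)) (real j / real n) ^ j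
      * geom_mean s P (real (n - j) / real n) ^ (n - j)
      * (fact (n - j) / (\<Prod>i=1..k. fact (y i))
         * (\<Prod>i=1..k. geom_mean s (p i / P) (real (y i) / real (n - j)) ^ y i))"
    using prod_geom_mean_rescale[OF p P y, of s n]
    unfolding fact_div_prod_fact_fun_upd[OF j] prod_Suc
    by (simp only: mult_ac)
qed

theorem multinomial_geom_mean_sum_le:
  assumes "prob_dist k p" "1 \<le> k" "0 \<le> s" "s < 1"
  shows "multinomial_geom_mean_sum k n p s \<le> (1 / (1 - s)) ^ (k - 1)"
  using assms(2,1)
proof (induction k arbitrary: n p rule: nat_induct_at_least)
  case base
  then show ?case
    using multinomial_geom_mean_sum_1[of p n s] by (simp add: prob_dist_def)
next
  case (Suc k)
  define P where "P = (\<Sum>i=1..k. p i)"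
  define q where "q = p (Suc k)"
  define B where "B = (1 / (1 - s)) ^ (k - 1)"
  have p: "\<And>i. i \<in> {1..k} \<Longrightarrow> 0 \<le> p i" and "0 \<le> q" and "P = 1 - q"
    using Suc.prems by (auto simp: prob_dist_def P_def q_def)
  have sub_bound: "geom_mean s P (real (n - j) / real n) ^ (n - j)
        * multinomial_geom_mean_sum k (n - j) (\<lambda>i. p i / P) s
      \<le> geom_mean s P (real (n - j) / real n) ^ (n - j) * B" for j
  proof (cases "P = 0")
    case False
    then have "prob_dist k (\<lambda>i. p i / P)"
      using p sum_nonneg[of "{1..k}" p]
      by (auto simp: prob_dist_def P_def sum_divide_distrib[symmetric])
    then show ?thesis
      unfolding B_def using Suc.IH assms(3,4) by (intro mult_left_mono zero_le_power geom_mean_nonneg) auto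
  next
    case True
    \<comment> \<open>then \<open>\<lambda>i. p i / P\<close> is junk, but its weight vanishes unless \<open>j = n\<close>\<close>
    moreover have "1 \<le> B"
      unfolding B_def using assms(3,4) by simp
    ultimately show ?thesis
      by (cases "n - j = 0") (auto simp: multinomial_geom_mean_sum_0 geom_mean_0_left power_0_left)
  qed
  have "multinomial_geom_mean_sum (Suc k) n p s
      = (\<Sum>j\<le>n. real (n choose j) * geom_mean s q (real j / real n) ^ j
          * (geom_mean s P (real (n - j) / real n) ^ (n - j)
             * multinomial_geom_mean_sum k (n - j) (\<lambda>i. p i / P) s))"
    using multinomial_geom_mean_sum_Suc[OF p P_def, of n s] unfolding q_def by (simp only: mult_ac)
  also have "\<dots> \<le> (\<Sum>j\<le>n. real (n choose j) * geom_mean s q (real j / real n) ^ j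
          * (geom_mean s P (real (n - j) / real n) ^ (n - j) * B))"
    by (intro sum_mono mult_left_mono sub_bound) (auto simp: geom_mean_nonneg)
  also have "\<dots> = B * (\<Sum>j\<le>n. real (n choose j) * geom_mean s q (real j / real n) ^ j
          * geom_mean s (1 - q) (real (n - j) / real n) ^ (n - j))"
    unfolding \<open>P = 1 - q\<close> sum_distrib_left by (simp only: mult_ac)
  also have "\<dots> \<le> B * (1 / (1 - s))"
    using \<open>0 \<le> q\<close> \<open>P = 1 - q\<close> p assms(3,4) sum_nonneg[of "{1..k}" p]
    by (intro mult_left_mono binomial_geom_mean_sum_le) (auto simp: B_def P_def)
  also have "\<dots> = (1 / (1 - s)) ^ (Suc k - 1)"
    unfolding B_def using Suc.hyps by (cases k) auto
  finally show ?case .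
qed

lemma power_mult_exp_KL_summand:
  fixes p s :: real and m n :: nat
  assumes "0 \<le> p" "n > 0"
  shows "p ^ m * exp (s * real n * (if real m / real n = 0 then 0 else real m / real n * ln (real m / real n / p)))
       = geom_mean s p (real m / real n) ^ m"
  \<comment> \<open>for \<open>p = 0 < m\<close> the summand contains the junk value \<open>ln 0 = 0\<close>, but both sides vanish\<close>
proof (cases "m = 0 \<or> p = 0")
  case False
  define q where "q = real m / real n"
  have "q > 0" "p > 0"
    using False assms by (auto simp: q_def)
  have KL_summand: "(if real m / real n = 0 then 0 else real m / real n * ln (real m / real n / p))
      = q * ln (q / p)"
    using \<open>q > 0\<close> by (simp add: q_def)
  have exponent: "s * real n * (q * ln (q / p)) = real m * (s * ln (q / p))"
    using assms by (simp add: q_def)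
  have "p ^ m * exp (s * real n * (if real m / real n = 0 then 0
        else real m / real n * ln (real m / real n / p)))
      = (p * exp (s * ln (q / p))) ^ m"
    unfolding KL_summand exponent exp_of_nat_mult power_mult_distrib ..
  also have "p * exp (s * ln (q / p)) = geom_mean s p q"
    using \<open>q > 0\<close> \<open>p > 0\<close>
    by (simp add: geom_mean_def powr_def ln_div exp_add[symmetric] exp_diff algebra_simps)
  finally show ?thesis
    unfolding q_def .
qed (use assms in \<open>auto simp: geom_mean_0_left\<close>)

lemma multinomial_expectation_exp_KL:
  assumes p: "\<And>i. i \<in> {1..k} \<Longrightarrow> 0 \<le> p i" and "n > 0"
  shows "multinomial_expectation n k p (\<lambda>x. exp (s * real n * KL k (\<lambda>i. real (x i) / real n) p))
       = multinomial_geom_mean_sum k n p s"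
  unfolding multinomial_expectation_def multinomial_geom_mean_sum_def
proof (intro sum.cong refl)
  fix x :: "nat \<Rightarrow> nat"
  have "(\<Prod>i=1..k. p i ^ x i) * exp (s * real n * KL k (\<lambda>i. real (x i) / real n) p)
      = (\<Prod>i=1..k. p i ^ x i * exp (s * real n * (if real (x i) / real n = 0 then 0
           else real (x i) / real n * ln (real (x i) / real n / p i))))"
    by (simp add: KL_def sum_distrib_left exp_sum prod.distrib)
  also have "\<dots> = (\<Prod>i=1..k. geom_mean s (p i) (real (x i) / real n) ^ x i)"
    using p \<open>n > 0\<close> by (intro prod.cong refl power_mult_exp_KL_summand) auto
  finally show "multinomial_pmf n k p x * exp (s * real n * KL k (\<lambda>i. real (x i) / real n) p)
      = fact n / (\<Prod>i=1..k. fact (x i)) * (\<Prod>i=1..k. geom_mean s (p i) (real (x i) / real n) ^ x i)"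
    by (simp add: multinomial_pmf_def)
qed

theorem theorem1p3:
  fixes n k :: nat and p :: "nat \<Rightarrow> real" and t :: real
  assumes "n \<ge> 1" and "k \<ge> 2" and "prob_dist k p"
    and "0 \<le> t" and "t < real n"
  shows "multinomial_expectation n k p
           (\<lambda>x. exp (t * KL k (\<lambda>i. real (x i) / real n) p))
         \<le> (1 / (1 - t / real n)) ^ (k - 1)"
proof -
  define s where "s = t / real n"
  have "t = s * real n" "0 \<le> s" "s < 1"
    using assms by (auto simp: s_def)
  have p: "\<And>i. i \<in> {1..k} \<Longrightarrow> 0 \<le> p i"
    using assms(3) by (simp add: prob_dist_def)
  have "multinomial_expectation n k p (\<lambda>x. exp (t * KL k (\<lambda>i. real (x i) / real n) p))
      = multinomial_geom_mean_sum k n p s"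
    using multinomial_expectation_exp_KL[OF p, where n = n and s = s] \<open>t = s * real n\<close> assms(1) by simp
  also have "\<dots> \<le> (1 / (1 - s)) ^ (k - 1)"
    using multinomial_geom_mean_sum_le[OF assms(3)] assms(2) \<open>0 \<le> s\<close> \<open>s < 1\<close> by simp
  finally show ?thesis
    unfolding s_def .
qed

end
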